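(* Let $G$ be a topological group (a group with a topology making multiplication jointly continuous and inversion continuous; no separation axiom assumed). Then $G$ is dense-connected if and only if the topology of $G$ is indiscrete.
   Context: A space $X$ is dense-connected if every dense subset of $X$ (with the subspace topology) is connected. *)

theory Defs
  imports "HOL-Analysis.Analysis" "HOL-Algebra.Group"
begin

definition topological_group :: "('a, 'b) monoid_scheme \<Rightarrow> 'a topology \<Rightarrow> bool" where
  "topological_group G X \<longleftrightarrow>
     group G \<and> topspace X = carrier G \<and>
     continuous_map (prod_topology X X) X (\<lambda>(x, y). x \<otimes>\<^bsub>G\<^esub> y) \<and>
     continuous_map X X (\<lambda>x. inv\<^bsub>G\<^esub> x)"

definition dense_connected :: "'a topology \<Rightarrow> bool" where
  "dense_connected X \<longleftrightarrow>
     (\<forall>S. S \<subseteq> topspace X \<and> X closure_of S = topspace X \<longrightarrow> connected_space (subtopology X S))"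

definition indiscrete :: "'a topology \<Rightarrow> bool" where
  "indiscrete X \<longleftrightarrow> (\<forall>U. openin X U \<longrightarrow> U = {} \<or> U = topspace X)"

end

theory Submission
  imports Defs
begin

text \<open>A dense-connected space is hyperconnected: if two nonempty open sets \<open>U\<close>, \<open>V\<close> were
disjoint, then \<open>U\<close> together with the exterior of \<open>U\<close> would be a dense set disconnected by
these two open pieces. In a topological group hyperconnectedness forces indiscreteness:
given \<open>a \<in> U\<close> open and any \<open>g\<close>, continuity of multiplication at \<open>(a, 1)\<close> yields open
\<open>V\<^sub>1 \<ni> a\<close>, \<open>V\<^sub>2 \<ni> 1\<close> with \<open>V\<^sub>1 V\<^sub>2 \<subseteq> U\<close>; the open set \<open>g V\<^sub>2\<inverse>\<close> meets \<open>V\<^sub>1\<close>, so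
\<open>g \<in> V\<^sub>1 V\<^sub>2 \<subseteq> U\<close>.\<close>

definition hyperconnected_space :: "'a topology \<Rightarrow> bool" where
  "hyperconnected_space X \<longleftrightarrow>
     (\<forall>U V. openin X U \<and> openin X V \<and> U \<noteq> {} \<and> V \<noteq> {} \<longrightarrow> U \<inter> V \<noteq> {})"

lemma indiscrete_imp_connected_space_subtopology:
  assumes "indiscrete X"
  shows "connected_space (subtopology X S)"
  unfolding connected_space_clopen_in
  using assms by (auto simp: indiscrete_def openin_subtopology)

lemma indiscrete_imp_dense_connected: "indiscrete X \<Longrightarrow> dense_connected X"
  by (simp add: dense_connected_def indiscrete_imp_connected_space_subtopology)

lemma dense_connected_imp_hyperconnected_space:
  assumes dc: "dense_connected X"
  shows "hyperconnected_space X"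
  unfolding hyperconnected_space_def
proof (intro allI impI notI)
  fix U V
  assume "openin X U \<and> openin X V \<and> U \<noteq> {} \<and> V \<noteq> {}" and disjoint: "U \<inter> V = {}"
  then have U: "openin X U" "U \<noteq> {}" and V: "openin X V" "V \<noteq> {}" by auto
  define E where "E = topspace X - X closure_of U"
  have E_open: "openin X E"
    unfolding E_def by (simp add: openin_diff)
  have "V \<subseteq> E"
    using openin_Int_closure_of_eq_empty[OF V(1)] disjoint openin_subset[OF V(1)]
    by (auto simp: E_def)
  then have "E \<noteq> {}" using V(2) by blast
  have U_E: "U \<inter> E = {}"
    using closure_of_subset[OF openin_subset[OF U(1)]] by (auto simp: E_def)
  have "X closure_of (U \<union> E) = topspace X"
    using closure_of_subset[of E X] closure_of_subset_topspace[of X "U \<union> E"]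
    by (auto simp: closure_of_Un E_def)
  moreover have "U \<union> E \<subseteq> topspace X"
    using openin_subset[OF U(1)] by (auto simp: E_def)
  ultimately have "connected_space (subtopology X (U \<union> E))"
    using dc by (simp add: dense_connected_def)
  then have "connectedin X (U \<union> E)"
    using \<open>U \<union> E \<subseteq> topspace X\<close> by (simp add: connectedin_def)
  then show False
    using U E_open U_E \<open>E \<noteq> {}\<close> unfolding connectedin by blast
qed

context
  fixes G :: "('a, 'b) monoid_scheme" (structure) and X :: "'a topology"
  assumes tg: "topological_group G X"
begin

interpretation group G
  using tg by (simp add: topological_group_def)

lemma topological_group_topspace: "topspace X = carrier G"
  using tg by (simp add: topological_group_def)

lemma topological_group_continuous_mult: "continuous_map (prod_topology X X) X (\<lambda>(x, y). x \<otimes> y)"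
  using tg by (simp add: topological_group_def)

lemma topological_group_continuous_inv_mult:
  assumes "g \<in> carrier G"
  shows "continuous_map X X (\<lambda>x. inv x \<otimes> g)"
proof -
  have "continuous_map X (prod_topology X X) (\<lambda>x. (inv x, g))"
    using tg assms
    by (intro continuous_map_pairedI) (auto simp: topological_group_def topological_group_topspace)
  from continuous_map_compose[OF this topological_group_continuous_mult] show ?thesis
    by (simp add: o_def)
qed

lemma topological_group_mult_nhds:
  assumes U: "openin X U" and "a \<in> U"
  obtains V1 V2 where "openin X V1" "openin X V2" "a \<in> V1" "\<one> \<in> V2"
    "\<And>x y. x \<in> V1 \<Longrightarrow> y \<in> V2 \<Longrightarrow> x \<otimes> y \<in> U"
proof -
  define P where "P = {z \<in> topspace (prod_topology X X). (\<lambda>(x, y). x \<otimes> y) z \<in> U}"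
  have "openin (prod_topology X X) P"
    unfolding P_def by (rule openin_continuous_map_preimage[OF topological_group_continuous_mult U])
  moreover have "(a, \<one>) \<in> P"
    using assms openin_subset[OF U] by (auto simp: P_def topological_group_topspace)
  ultimately obtain V1 V2 where V: "openin X V1" "openin X V2" "a \<in> V1" "\<one> \<in> V2"
    and "V1 \<times> V2 \<subseteq> P"
    unfolding openin_prod_topology_alt by blast
  show thesis
  proof (rule that[OF V])
    fix x y
    assume "x \<in> V1" "y \<in> V2"
    with \<open>V1 \<times> V2 \<subseteq> P\<close> have "(x, y) \<in> P" by blast
    then show "x \<otimes> y \<in> U" by (simp add: P_def)
  qed
qed

lemma hyperconnected_space_imp_indiscrete:
  assumes hc: "hyperconnected_space X"
  shows "indiscrete X"
  unfolding indiscrete_def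
proof (intro allI impI)
  fix U
  assume U: "openin X U"
  show "U = {} \<or> U = topspace X"
  proof (cases "U = {}")
    case False
    then obtain a where "a \<in> U" by blast
    then obtain V1 V2 where V: "openin X V1" "openin X V2" "a \<in> V1" "\<one> \<in> V2"
      and V_mult: "\<And>x y. x \<in> V1 \<Longrightarrow> y \<in> V2 \<Longrightarrow> x \<otimes> y \<in> U"
      using topological_group_mult_nhds[OF U] by blast
    have "g \<in> U" if g: "g \<in> carrier G" for g
    proof -
      define B where "B = {x \<in> topspace X. inv x \<otimes> g \<in> V2}"
      have "openin X B"
        unfolding B_def
        by (rule openin_continuous_map_preimage[OF topological_group_continuous_inv_mult[OF g] V(2)])
      moreover have "g \<in> B"
        using g V(4) by (simp add: B_def topological_group_topspace)
      ultimately have "V1 \<inter> B \<noteq> {}"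
        using hc V(1,3) unfolding hyperconnected_space_def by blast
      then obtain x where x: "x \<in> V1" "x \<in> carrier G" "inv x \<otimes> g \<in> V2"
        by (auto simp: B_def topological_group_topspace)
      have "x \<otimes> (inv x \<otimes> g) \<in> U" by (rule V_mult[OF x(1,3)])
      then show "g \<in> U"
        using x(2) g by (simp add: m_assoc[symmetric])
    qed
    then show ?thesis
      using openin_subset[OF U] by (auto simp: topological_group_topspace)
  qed simp
qed

end

theorem corollary4p5:
  fixes G :: "('a, 'b) monoid_scheme" and X :: "'a topology"
  assumes "topological_group G X"
  shows "dense_connected X \<longleftrightarrow> indiscrete X"
  using dense_connected_imp_hyperconnected_space hyperconnected_space_imp_indiscrete[OF assms]
    indiscrete_imp_dense_connected by blast

end
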